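(* Let $\mathbb{K}$ be a field, let $P_1, P_2 \in \mathbb{K}[X]$ be irreducible, let $m \geq 1$, and let $f_m : \mathbb{K}[X]/(P_1^m) \to \mathbb{K}[X]/(P_2^m)$ be a ring isomorphism stabilizing $\mathbb{K}$. Let $R \in \mathbb{K}[X]$ be such that $f_m$ sends the class of $X$ to the class of $R$, and let $Q$ be the remainder of the Euclidean division of $R$ by $P_2$ (which does not depend on the choice of $R$). If $Q' \neq 0$, then the rings $\mathbb{K}[X]/(P_1^n)$ and $\mathbb{K}[X]/(P_2^n)$ are isomorphic for all $n \geq 1$.
   Context: A ring homomorphism $f : A \to B$ between $\mathbb{K}$-algebras stabilizes $\mathbb{K}$ if there is a field automorphism $\sigma_f$ of $\mathbb{K}$ with $f(a) = \sigma_f(a)$ for all $a \in \mathbb{K}$ (with $\mathbb{K}$ identified with its image in $A$ and $B$). $Q'$ denotes the formal derivative of $Q$. *)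

theory Defs
  imports "HOL-Algebra.QuotRing" "HOL-Computational_Algebra.Polynomial"
begin

definition poly_ring :: "'a::field poly ring" where
  "poly_ring = \<lparr>carrier = UNIV, monoid.mult = (*), one = 1, zero = 0, add = (+)\<rparr>"

definition pideal :: "'a::field poly \<Rightarrow> 'a poly set" where
  "pideal P = cgenideal poly_ring P"

definition quot_poly :: "'a::field poly \<Rightarrow> 'a poly set ring" where
  "quot_poly P = poly_ring Quot (pideal P)"

definition pclass :: "'a::field poly \<Rightarrow> 'a poly \<Rightarrow> 'a poly set" where
  "pclass P p = a_r_coset poly_ring (pideal P) p"

definition field_aut :: "('a::field \<Rightarrow> 'a) \<Rightarrow> bool" where
  "field_aut \<sigma> \<longleftrightarrow> bij \<sigma> \<and> (\<forall>a b. \<sigma> (a + b) = \<sigma> a + \<sigma> b) \<and>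
     (\<forall>a b. \<sigma> (a * b) = \<sigma> a * \<sigma> b) \<and> \<sigma> 1 = 1"

definition stabilizes_K :: "'a::field poly \<Rightarrow> 'a poly \<Rightarrow> ('a poly set \<Rightarrow> 'a poly set) \<Rightarrow> bool" where
  "stabilizes_K P1 P2 f \<longleftrightarrow>
     (\<exists>\<sigma>. field_aut \<sigma> \<and> (\<forall>a. f (pclass P1 [:a:]) = pclass P2 [:\<sigma> a:]))"

end

theory Submission
  imports Defs "HOL-Computational_Algebra.Polynomial_Factorial"
begin

(* Let sigma be the automorphism of K by which f acts on constants and write g^sigma for g with
   sigma applied to its coefficients. Then f is induced by the semilinear substitution
   g |-> g^sigma(R); hence P2 divides P1^sigma(R), and every polynomial is congruent modulo P2 to
   some g^sigma(R). Whenever P2 divides P1^sigma(S) exactly once, the substitution g |-> g^sigma(S)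
   takes g into (P2^n) iff g lies in (P1^n), and a Hensel-type lifting makes it onto modulo P2^n;
   so it induces K[X]/(P1^n) = K[X]/(P2^n) for every n. Such an S is found by first-order Taylor
   expansion: if P2' = 0 then S = R works, and otherwise one of R and R + P2 works. The latter
   needs P1' /= 0, which holds because if P1' = 0, differentiation preserves the ideal (P1), and
   transporting this along the substitution contradicts P2' /= 0. *)

section \<open>Divisibility and derivatives of polynomials\<close>

lemma euclidean_bezout:
  fixes a b :: "'a::euclidean_ring"
  shows "\<exists>d u v. d = u * a + v * b \<and> d dvd a \<and> d dvd b"
proof (induction b arbitrary: a rule: measure_induct_rule[where f = euclidean_size])
  case (less b)
  show ?case
  proof (cases "b = 0")
    case True
    then show ?thesis by (intro exI[of _ a] exI[of _ 1] exI[of _ 0]) simp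
  next
    case False
    then have "euclidean_size (a mod b) < euclidean_size b" by (rule mod_size_less)
    with less obtain d u v where d: "d = u * b + v * (a mod b)" "d dvd b" "d dvd a mod b"
      by blast
    have "a = (a div b) * b + a mod b" by simp
    then have "d dvd a" using d(2,3) by (metis dvd_add dvd_mult)
    moreover have "d = v * a + (u - v * (a div b)) * b"
      using d(1) by (simp add: minus_div_mult_eq_mod[symmetric] algebra_simps)
    ultimately show ?thesis using d(2) by blast
  qed
qed

lemma irreducible_bezout:
  fixes p h :: "'a::euclidean_ring"
  assumes "irreducible p" and "\<not> p dvd h"
  obtains u v where "u * h + v * p = 1"
proof -
  obtain d u v where d: "d = u * h + v * p" "d dvd h" "d dvd p"
    using euclidean_bezout[of h p] by blast
  from \<open>d dvd p\<close> obtain e where e: "p = d * e" by (elim dvdE)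
  have "\<not> is_unit e"
  proof
    assume "is_unit e"
    then have "p dvd d" using e by simp
    with \<open>d dvd h\<close> \<open>\<not> p dvd h\<close> show False by (blast intro: dvd_trans)
  qed
  then have "is_unit d" using irreducibleD[OF assms(1) e] by blast
  then obtain k where "1 = d * k" by (elim dvdE)
  then have "(k * u) * h + (k * v) * p = 1" by (simp add: d(1) algebra_simps)
  then show thesis by (rule that)
qed

lemma irreducible_bezout_power:
  fixes p h :: "'a::euclidean_ring"
  assumes "irreducible p" and "\<not> p dvd h"
  obtains u v where "u * h + v * p ^ n = 1"
proof -
  obtain u v where uv: "u * h + v * p = 1" using irreducible_bezout[OF assms] .
  have "\<exists>a b. a * h + b * p ^ n = 1"
  proof (induction n)
    case 0
    show ?case by (intro exI[of _ 0] exI[of _ 1]) simp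
  next
    case (Suc n)
    then obtain a b where "a * h + b * p ^ n = 1" by blast
    then have "(a * h + b * p ^ n) * (u * h + v * p) = 1" using uv by simp
    then have "(a * u * h + a * v * p + b * u * p ^ n) * h + (b * v) * p ^ Suc n = 1"
      by (simp add: algebra_simps)
    then show ?case by blast
  qed
  then show thesis using that by blast
qed

lemma irreducible_power_dvd_mult_cancel:
  fixes p w x :: "'a::euclidean_ring"
  assumes "irreducible p" and "\<not> p dvd w" and "p ^ n dvd w * x"
  shows "p ^ n dvd x"
proof -
  obtain u v where "u * w + v * p ^ n = 1" using irreducible_bezout_power[OF assms(1,2)] .
  then have "x = (u * w + v * p ^ n) * x" by simp
  also have "\<dots> = u * (w * x) + (v * x) * p ^ n" by (simp add: algebra_simps)
  finally show ?thesis using assms(3) by (metis dvd_add dvd_mult dvd_triv_right)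
qed

lemma dvd_diff_right_iff:
  fixes a b c :: "'a::comm_ring_1"
  assumes "a dvd b"
  shows "a dvd b - c \<longleftrightarrow> a dvd c"
  using dvd_add_right_iff[OF assms, of "- c"] by simp

lemma dvd_diff_left_iff:
  fixes a b c :: "'a::comm_ring_1"
  assumes "a dvd c"
  shows "a dvd b - c \<longleftrightarrow> a dvd b"
  using dvd_add_left_iff[of a "- c" b] assms by simp

lemma degree_pderiv_less:
  fixes p :: "'a::idom poly"
  assumes "pderiv p \<noteq> 0"
  shows "degree (pderiv p) < degree p"
proof (rule ccontr)
  assume "\<not> degree (pderiv p) < degree p"
  then have "lead_coeff (pderiv p) = 0" by (simp add: coeff_pderiv coeff_eq_0)
  with assms show False by simp
qed

lemma not_dvd_pderiv:
  fixes p :: "'a::idom poly"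
  assumes "pderiv p \<noteq> 0"
  shows "\<not> p dvd pderiv p"
  using dvd_imp_degree_le[of p "pderiv p"] degree_pderiv_less[OF assms] assms by linarith

lemma dvd_pderiv_if_pderiv_eq_0:
  fixes p a :: "'a::idom poly"
  assumes "pderiv p = 0" and "p dvd a"
  shows "p dvd pderiv a"
  using assms by (auto elim!: dvdE simp: pderiv_mult)

lemma pcompose_first_order_taylor:
  fixes p a b :: "'a::idom poly"
  shows "b ^ 2 dvd pcompose p (a + b) - pcompose p a - b * pcompose (pderiv p) a"
proof (induction p)
  case (pCons c p)
  have "pcompose (pCons c p) (a + b) - pcompose (pCons c p) a - b * pcompose (pderiv (pCons c p)) a
      = (a + b) * (pcompose p (a + b) - pcompose p a - b * pcompose (pderiv p) a)
        + b ^ 2 * pcompose (pderiv p) a"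
    by (simp add: pcompose_pCons pderiv_pCons pcompose_add algebra_simps power2_eq_square)
  then show ?case using pCons.IH by (metis dvd_add dvd_mult dvd_triv_left)
qed simp

lemma pcompose_power_left:
  fixes p q :: "'a::comm_semiring_1 poly"
  shows "pcompose (p ^ n) q = pcompose p q ^ n"
  by (induction n) (simp_all add: pcompose_mult pcompose_1)

lemma pcompose_dvd_diff:
  fixes r x y :: "'a::comm_ring_1 poly"
  assumes "m dvd x - y"
  shows "m dvd pcompose r x - pcompose r y"
proof (induction r)
  case (pCons c r)
  have "pcompose (pCons c r) x - pcompose (pCons c r) y
      = x * (pcompose r x - pcompose r y) + (x - y) * pcompose r y"
    by (simp add: pcompose_pCons algebra_simps)
  then show ?case using pCons.IH assms by (metis dvd_add dvd_mult dvd_mult2)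
qed simp

lemma surj_map_poly:
  assumes "f 0 = 0" and "surj f"
  shows "surj (map_poly f)"
proof (rule surjI)
  define g where "g y = (if y = 0 then 0 else inv_into UNIV f y)" for y
  have "f \<circ> g = id" using assms by (auto simp: g_def surj_f_inv_f)
  then show "map_poly f (map_poly g r) = r" for r
    using assms(1) by (simp add: map_poly_map_poly g_def)
qed

section \<open>Ring endomorphisms acting on coefficients\<close>

locale ring_endo =
  fixes \<sigma> :: "'a::idom \<Rightarrow> 'a"
  assumes hom_add: "\<sigma> (a + b) = \<sigma> a + \<sigma> b"
    and hom_mult: "\<sigma> (a * b) = \<sigma> a * \<sigma> b"
    and hom_one: "\<sigma> 1 = 1"
begin

lemma hom_zero: "\<sigma> 0 = 0"
  using hom_add[of 0 0] by (metis add.right_neutral add_left_cancel)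

lemma hom_diff: "\<sigma> (a - b) = \<sigma> a - \<sigma> b"
  using hom_add[of "a - b" b] by (simp add: eq_diff_eq)

lemma hom_of_nat: "\<sigma> (of_nat n) = of_nat n"
  by (induction n) (simp_all add: hom_zero hom_add hom_one)

lemma coeff_map_poly_hom: "coeff (map_poly \<sigma> p) n = \<sigma> (coeff p n)"
  by (rule coeff_map_poly[of \<sigma>, OF hom_zero])

lemma map_poly_add: "map_poly \<sigma> (p + q) = map_poly \<sigma> p + map_poly \<sigma> q"
  by (intro poly_eqI) (simp add: coeff_map_poly_hom hom_add)

lemma map_poly_diff: "map_poly \<sigma> (p - q) = map_poly \<sigma> p - map_poly \<sigma> q"
  by (intro poly_eqI) (simp add: coeff_map_poly_hom hom_diff)

lemma map_poly_X: "map_poly \<sigma> [:0, 1:] = [:0, 1:]"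
  by (simp add: map_poly_pCons hom_zero hom_one)

lemma map_poly_mult: "map_poly \<sigma> (p * q) = map_poly \<sigma> p * map_poly \<sigma> q"
proof (induction p)
  case (pCons a p)
  then show ?case
    by (simp add: map_poly_add map_poly_pCons map_poly_smult hom_zero hom_mult)
qed simp

lemma map_poly_power: "map_poly \<sigma> (p ^ n) = map_poly \<sigma> p ^ n"
  by (induction n) (simp_all add: hom_one map_poly_mult)

lemma map_poly_pcompose: "map_poly \<sigma> (pcompose p q) = pcompose (map_poly \<sigma> p) (map_poly \<sigma> q)"
  by (induction p) (simp_all add: pcompose_pCons map_poly_add map_poly_mult map_poly_pCons hom_zero)

lemma map_poly_pderiv: "map_poly \<sigma> (pderiv p) = pderiv (map_poly \<sigma> p)"
  by (intro poly_eqI) (simp add: coeff_map_poly_hom coeff_pderiv hom_mult hom_add hom_one hom_of_nat)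

end

section \<open>Quotients of the polynomial ring\<close>

lemma poly_ring_simps [simp]:
  "carrier poly_ring = UNIV" "monoid.mult poly_ring = (*)" "add poly_ring = (+)"
  "one poly_ring = 1" "zero poly_ring = 0"
  by (simp_all add: poly_ring_def)

lemma cring_poly_ring: "cring (poly_ring :: 'a::field poly ring)"
  unfolding poly_ring_def
  by unfold_locales (auto simp: algebra_simps Units_def intro: exI[of _ "- _"])

lemma ring_poly_ring: "ring (poly_ring :: 'a::field poly ring)"
  using cring_poly_ring by (rule cring.axioms)

lemma mem_pideal_iff: "h \<in> pideal p \<longleftrightarrow> p dvd (h :: 'a::field poly)"
  by (auto simp: pideal_def cgenideal_def dvd_def mult.commute)

lemma ideal_pideal: "ideal (pideal (p :: 'a::field poly)) poly_ring"
  unfolding pideal_def by (rule cring.cgenideal_ideal[OF cring_poly_ring]) simp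

lemma pclass_eq: "pclass p a = {h + a | h. p dvd h}"
  by (auto simp: pclass_def a_r_coset_def' mem_pideal_iff)

lemma pclass_eq_iff: "pclass p a = pclass p b \<longleftrightarrow> p dvd (a - b :: 'a::field poly)"
proof
  assume "pclass p a = pclass p b"
  then have "a \<in> pclass p b" unfolding pclass_eq by force
  then show "p dvd a - b" unfolding pclass_eq by auto
next
  assume d: "p dvd a - b"
  have "h + a = (h + (a - b)) + b" "h + b = (h - (a - b)) + a" for h :: "'a poly"
    by simp_all
  then show "pclass p a = pclass p b"
    unfolding pclass_eq using d by (blast intro: dvd_add dvd_diff)
qed

lemma pclass_ring_hom: "pclass (p :: 'a::field poly) \<in> ring_hom poly_ring (quot_poly p)"
proof -
  have "pclass p = (\<lambda>a. pideal p +>\<^bsub>poly_ring\<^esub> a)" by (simp add: fun_eq_iff pclass_def)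
  then show ?thesis
    using ideal.rcos_ring_hom[OF ideal_pideal[of p]] by (simp add: quot_poly_def)
qed

lemma ring_quot_poly: "ring (quot_poly (p :: 'a::field poly))"
  unfolding quot_poly_def
  by (rule cring.axioms(1)[OF ideal.quotient_is_cring[OF ideal_pideal cring_poly_ring]])

lemma carrier_quot_poly: "carrier (quot_poly (p :: 'a::field poly)) = range (pclass p)"
  by (auto simp: quot_poly_def FactRing_def A_RCOSETS_def' pclass_def)

lemma pclass_in_carrier: "pclass (p :: 'a::field poly) a \<in> carrier (quot_poly p)"
  by (simp add: carrier_quot_poly)

lemma pclass_add: "pclass p (a + b) = pclass p a \<oplus>\<^bsub>quot_poly p\<^esub> pclass (p :: 'a::field poly) b"
  using ring_hom_add[OF pclass_ring_hom, of a b p] by simp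

lemma pclass_mult: "pclass p (a * b) = pclass p a \<otimes>\<^bsub>quot_poly p\<^esub> pclass (p :: 'a::field poly) b"
  using ring_hom_mult[OF pclass_ring_hom, of a b p] by simp

lemma pclass_zero: "pclass (p :: 'a::field poly) 0 = \<zero>\<^bsub>quot_poly p\<^esub>"
  using ring_hom_zero[OF pclass_ring_hom ring_poly_ring ring_quot_poly, of p] by simp

lemma pclass_one: "pclass (p :: 'a::field poly) 1 = \<one>\<^bsub>quot_poly p\<^esub>"
  using ring_hom_one[OF pclass_ring_hom, of p] by simp

section \<open>Semilinear substitutions\<close>

locale field_endo = ring_endo \<sigma> for \<sigma> :: "'a::field \<Rightarrow> 'a"
begin

lemma pcompose_map_poly_dvd_mono:
  assumes "p dvd g"
  shows "pcompose (map_poly \<sigma> p) S dvd pcompose (map_poly \<sigma> g) S"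
  using assms by (auto elim!: dvdE simp: map_poly_mult pcompose_mult)

lemma dvd_of_dvd_pcompose_map_poly:
  fixes p q S h :: "'a poly"
  assumes "irreducible p" and "\<not> is_unit q"
    and "q dvd pcompose (map_poly \<sigma> p) S" and "q dvd pcompose (map_poly \<sigma> h) S"
  shows "p dvd h"
proof (rule ccontr)
  assume "\<not> p dvd h"
  then obtain u v where "u * h + v * p = 1" using irreducible_bezout assms(1) by blast
  then have "pcompose (map_poly \<sigma> u) S * pcompose (map_poly \<sigma> h) S
      + pcompose (map_poly \<sigma> v) S * pcompose (map_poly \<sigma> p) S = 1"
    by (metis map_poly_add map_poly_mult pcompose_add pcompose_mult map_poly_1' hom_one pcompose_1)
  then have "q dvd 1" using assms(3,4) by (metis dvd_add dvd_mult)
  with assms(2) show False by simp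
qed

lemma power_dvd_pcompose_map_poly_iff:
  fixes p q S g :: "'a poly"
  assumes p: "irreducible p" and q: "irreducible q"
    and q_dvd: "q dvd pcompose (map_poly \<sigma> p) S"
    and q_sq: "\<not> q ^ 2 dvd pcompose (map_poly \<sigma> p) S"
  shows "q ^ n dvd pcompose (map_poly \<sigma> g) S \<longleftrightarrow> p ^ n dvd g"
proof
  show "q ^ n dvd pcompose (map_poly \<sigma> g) S" if "p ^ n dvd g"
  proof -
    have "q ^ n dvd pcompose (map_poly \<sigma> p) S ^ n" using q_dvd by (rule dvd_power_same)
    also have "\<dots> dvd pcompose (map_poly \<sigma> g) S"
      using pcompose_map_poly_dvd_mono[OF that] by (simp add: map_poly_power pcompose_power_left)
    finally show ?thesis .
  qed
  obtain w where w: "pcompose (map_poly \<sigma> p) S = q * w" using q_dvd by (elim dvdE)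
  have "\<not> q dvd w" using q_sq by (auto simp: w power2_eq_square)
  show "p ^ n dvd g" if "q ^ n dvd pcompose (map_poly \<sigma> g) S"
    using that
  proof (induction n arbitrary: g)
    case (Suc n)
    have "q dvd pcompose (map_poly \<sigma> g) S"
      using Suc.prems by (simp add: dvd_mult_left)
    then have "p dvd g"
      using dvd_of_dvd_pcompose_map_poly[OF p _ q_dvd] q by (auto simp: irreducible_not_unit)
    then obtain g' where g': "g = p * g'" by (elim dvdE)
    have "q * q ^ n dvd q * (w * pcompose (map_poly \<sigma> g') S)"
      using Suc.prems by (simp add: g' w map_poly_mult pcompose_mult mult.assoc)
    then have "q ^ n dvd w * pcompose (map_poly \<sigma> g') S"
      using q by (simp add: irreducible_def)
    then have "q ^ n dvd pcompose (map_poly \<sigma> g') S"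
      by (rule irreducible_power_dvd_mult_cancel[OF q \<open>\<not> q dvd w\<close>])
    then show ?case by (simp add: g' Suc.IH)
  qed simp
qed

lemma pcompose_map_poly_surj_mod_power:
  fixes p q S r :: "'a poly"
  assumes q: "irreducible q"
    and q_dvd: "q dvd pcompose (map_poly \<sigma> p) S"
    and q_sq: "\<not> q ^ 2 dvd pcompose (map_poly \<sigma> p) S"
    and surj_mod: "\<forall>r. \<exists>g. q dvd r - pcompose (map_poly \<sigma> g) S"
  shows "\<exists>g. q ^ n dvd r - pcompose (map_poly \<sigma> g) S"
proof (induction n arbitrary: r)
  case (Suc n)
  obtain w where w: "pcompose (map_poly \<sigma> p) S = q * w" using q_dvd by (elim dvdE)
  have "\<not> q dvd w" using q_sq by (auto simp: w power2_eq_square)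
  then obtain u v where uv: "u * w + v * q ^ n = 1" using irreducible_bezout_power[OF q] by blast
  obtain h where "q dvd r - pcompose (map_poly \<sigma> h) S" using surj_mod by blast
  then obtain t where t: "r - pcompose (map_poly \<sigma> h) S = q * t" by (elim dvdE)
  obtain e where e: "q ^ n dvd u * t - pcompose (map_poly \<sigma> e) S" using Suc.IH by blast
  \<comment> \<open>Since \<open>u w \<equiv> 1 mod q^n\<close>, the error \<open>q t\<close> is corrected by adding \<open>p e\<close>,
    where \<open>e\<close> lifts \<open>u t\<close>.\<close>
  have "r - pcompose (map_poly \<sigma> (h + p * e)) S = q * t - q * w * pcompose (map_poly \<sigma> e) S"
    by (simp add: map_poly_add map_poly_mult pcompose_add pcompose_mult w flip: t)
  also have "\<dots> = q * (t * (1 - u * w) + w * (u * t - pcompose (map_poly \<sigma> e) S))"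
    by (simp add: algebra_simps)
  finally have "r - pcompose (map_poly \<sigma> (h + p * e)) S
      = q * (t * (v * q ^ n) + w * (u * t - pcompose (map_poly \<sigma> e) S))"
    using uv by (metis add_diff_cancel_left')
  moreover have "q ^ n dvd t * (v * q ^ n) + w * (u * t - pcompose (map_poly \<sigma> e) S)"
    using e by simp
  ultimately have "q ^ Suc n dvd r - pcompose (map_poly \<sigma> (h + p * e)) S"
    by (simp add: mult_dvd_mono)
  then show ?case by blast
qed simp

lemma quot_poly_power_iso:
  fixes p q S :: "'a poly"
  assumes p: "irreducible p" and q: "irreducible q"
    and q_dvd: "q dvd pcompose (map_poly \<sigma> p) S"
    and q_sq: "\<not> q ^ 2 dvd pcompose (map_poly \<sigma> p) S"
    and surj_mod: "\<forall>r. \<exists>g. q dvd r - pcompose (map_poly \<sigma> g) S"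
  shows "quot_poly (p ^ n) \<simeq> quot_poly (q ^ n)"
proof -
  define \<phi> where "\<phi> g = pclass (q ^ n) (pcompose (map_poly \<sigma> g) S)" for g
  have "\<phi> \<in> ring_hom poly_ring (quot_poly (q ^ n))"
    by (rule ring_hom_memI)
      (simp_all add: \<phi>_def pclass_in_carrier map_poly_add map_poly_mult pcompose_add pcompose_mult
        pclass_add pclass_mult hom_one pcompose_1 pclass_one)
  then have \<phi>_hom: "ring_hom_ring poly_ring (quot_poly (q ^ n)) \<phi>"
    by (rule ring_hom_ringI2[OF ring_poly_ring ring_quot_poly])
  have "\<phi> ` carrier poly_ring = carrier (quot_poly (q ^ n))"
  proof (auto simp: carrier_quot_poly \<phi>_def)
    fix r
    obtain g where "q ^ n dvd r - pcompose (map_poly \<sigma> g) S"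
      using pcompose_map_poly_surj_mod_power[OF q q_dvd q_sq surj_mod] by blast
    then show "pclass (q ^ n) r \<in> range (\<lambda>g. pclass (q ^ n) (pcompose (map_poly \<sigma> g) S))"
      by (auto simp: pclass_eq_iff)
  qed
  then have "poly_ring Quot a_kernel poly_ring (quot_poly (q ^ n)) \<phi> \<simeq> quot_poly (q ^ n)"
    by (rule ring_hom_ring.FactRing_iso[OF \<phi>_hom])
  moreover have "a_kernel poly_ring (quot_poly (q ^ n)) \<phi> = pideal (p ^ n)"
    using power_dvd_pcompose_map_poly_iff[OF p q q_dvd q_sq]
    by (auto simp: a_kernel_def' mem_pideal_iff \<phi>_def pclass_zero[symmetric] pclass_eq_iff)
  ultimately show ?thesis by (simp add: quot_poly_def)
qed

lemma dvd_map_poly_diff_pcompose: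
  assumes "m dvd [:0, 1:] - pcompose (map_poly \<sigma> T) R"
  shows "m dvd map_poly \<sigma> a - pcompose (map_poly \<sigma> (pcompose a T)) R"
proof -
  have "pcompose (map_poly \<sigma> (pcompose a T)) R = pcompose (map_poly \<sigma> a) (pcompose (map_poly \<sigma> T) R)"
    by (simp add: map_poly_pcompose pcompose_assoc)
  then show ?thesis using pcompose_dvd_diff[OF assms, of "map_poly \<sigma> a"] by simp
qed

context
  fixes p q R T :: "'a poly"
  assumes surj: "surj \<sigma>" and p: "irreducible p" and q: "irreducible q"
    and q_dvd: "q dvd pcompose (map_poly \<sigma> p) R"
    and T: "q dvd [:0, 1:] - pcompose (map_poly \<sigma> T) R"
begin

lemma not_sq_dvd_pcompose_map_poly_if_pderiv_eq_0:
  assumes q': "pderiv q = 0"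
  shows "\<not> q ^ 2 dvd pcompose (map_poly \<sigma> p) R"
proof
  assume sq: "q ^ 2 dvd pcompose (map_poly \<sigma> p) R"
  obtain q0 where q0: "map_poly \<sigma> q0 = q" using surj_map_poly[OF hom_zero surj] by (metis surjD)
  define x where "x = pcompose (map_poly \<sigma> T) R"
  define V where "V = pcompose q0 T"
  have V: "pcompose (map_poly \<sigma> V) R = pcompose q x"
    by (simp add: V_def x_def map_poly_pcompose pcompose_assoc q0)
  \<comment> \<open>Taylor expansion of \<open>q\<close> at \<open>X\<close>: the linear term vanishes since \<open>q' = 0\<close>.\<close>
  have "(x - [:0, 1:]) ^ 2 dvd pcompose q x - q"
    using pcompose_first_order_taylor[where p = q and a = "[:0, 1:]" and b = "x - [:0, 1:]"] q' by simp
  moreover have "q ^ 2 dvd (x - [:0, 1:]) ^ 2"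
    using dvd_power_same[OF T, of 2] by (simp add: x_def power2_commute)
  ultimately have V_mod: "q ^ 2 dvd pcompose (map_poly \<sigma> V) R - q"
    unfolding V by (rule dvd_trans[rotated])
  have "q dvd q ^ 2" by (simp add: power2_eq_square)
  then have "q dvd pcompose (map_poly \<sigma> V) R - q" using V_mod by (rule dvd_trans)
  then have "q dvd pcompose (map_poly \<sigma> V) R" by (simp add: dvd_diff_left_iff)
  then have "p dvd V"
    using dvd_of_dvd_pcompose_map_poly[OF p _ q_dvd] q by (simp add: irreducible_not_unit)
  then have "q ^ 2 dvd pcompose (map_poly \<sigma> V) R"
    using sq pcompose_map_poly_dvd_mono dvd_trans by blast
  then have "q ^ 2 dvd q" using V_mod by (simp add: dvd_diff_right_iff)
  with q show False by (simp add: power2_eq_square irreducible_def)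
qed

lemma pderiv_eq_0_transfer:
  assumes p': "pderiv p = 0"
  shows "pderiv q = 0"
proof (rule ccontr)
  assume q': "pderiv q \<noteq> 0"
  have surj_map: "surj (map_poly \<sigma>)" using surj_map_poly[OF hom_zero surj] .
  obtain q0 where q0: "map_poly \<sigma> q0 = q" using surj_map by (metis surjD)
  obtain R0 where R0: "map_poly \<sigma> R0 = R" using surj_map by (metis surjD)
  have dvd_p: "p dvd g" if "q dvd pcompose (map_poly \<sigma> g) R" for g
    using dvd_of_dvd_pcompose_map_poly[OF p _ q_dvd that] q by (simp add: irreducible_not_unit)
  \<comment> \<open>Differentiating \<open>q0(T) \<in> (p)\<close> and \<open>X - R0(T) \<in> (p)\<close> shows \<open>p | T'\<close>
    and then \<open>p | 1\<close>.\<close>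
  have "p dvd pcompose q0 T"
    using dvd_map_poly_diff_pcompose[OF T, of q0] by (intro dvd_p) (simp add: q0 dvd_diff_right_iff)
  then have "p dvd pderiv (pcompose q0 T)" by (rule dvd_pderiv_if_pderiv_eq_0[OF p'])
  then have "p dvd pcompose (pderiv q0) T * pderiv T" by (simp add: pderiv_pcompose)
  moreover have "\<not> p dvd pcompose (pderiv q0) T"
  proof
    assume "p dvd pcompose (pderiv q0) T"
    then have "q dvd pcompose (map_poly \<sigma> (pcompose (pderiv q0) T)) R"
      using q_dvd pcompose_map_poly_dvd_mono dvd_trans by blast
    moreover have "q dvd pderiv q - pcompose (map_poly \<sigma> (pcompose (pderiv q0) T)) R"
      using dvd_map_poly_diff_pcompose[OF T, of "pderiv q0"] by (simp add: map_poly_pderiv q0)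
    ultimately have "q dvd pderiv q" by (simp add: dvd_diff_left_iff)
    with q' show False using not_dvd_pderiv by blast
  qed
  ultimately have "p dvd pderiv T"
    using field_poly_irreducible_imp_prime[OF p] by (simp add: prime_elem_dvd_mult_iff)
  have "q dvd pcompose (map_poly \<sigma> ([:0, 1:] - pcompose R0 T)) R"
    using dvd_map_poly_diff_pcompose[OF T, of R0]
    by (simp add: R0 map_poly_diff map_poly_X pcompose_diff pcompose_pCons)
  then have "p dvd pderiv ([:0, 1:] - pcompose R0 T)"
    by (intro dvd_pderiv_if_pderiv_eq_0[OF p'] dvd_p)
  then have "p dvd 1 - pcompose (pderiv R0) T * pderiv T"
    by (simp add: pderiv_diff pderiv_pcompose pderiv_pCons one_pCons)
  with \<open>p dvd pderiv T\<close> have "p dvd 1" by (simp add: dvd_diff_left_iff)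
  with p show False by (simp add: irreducible_not_unit)
qed

end

lemma exact_lift_if_pderiv_ne_0:
  fixes p q R :: "'a poly"
  assumes p: "irreducible p" and q: "irreducible q" and p': "pderiv p \<noteq> 0"
    and q_dvd: "q dvd pcompose (map_poly \<sigma> p) R"
  obtains S where "q dvd S - R" "q dvd pcompose (map_poly \<sigma> p) S"
    "\<not> q ^ 2 dvd pcompose (map_poly \<sigma> p) S"
proof (cases "q ^ 2 dvd pcompose (map_poly \<sigma> p) R")
  case False
  with q_dvd show thesis by (intro that[of R]) simp_all
next
  case True
  define D where "D = pcompose (map_poly \<sigma> (pderiv p)) R"
  have "\<not> q dvd D"
    using dvd_of_dvd_pcompose_map_poly[OF p _ q_dvd] q not_dvd_pderiv[OF p']
    by (auto simp: D_def irreducible_not_unit)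
  \<comment> \<open>By Taylor, moving \<open>R\<close> to \<open>R + q\<close> changes \<open>p^\<sigma>(R)\<close> by \<open>q D\<close>
    modulo \<open>q^2\<close>.\<close>
  have "q ^ 2 dvd pcompose (map_poly \<sigma> p) (R + q) - pcompose (map_poly \<sigma> p) R - q * D"
    using pcompose_first_order_taylor[where p = "map_poly \<sigma> p" and a = R and b = q]
    by (simp add: D_def map_poly_pderiv)
  from dvd_add[OF this True]
  have taylor: "q ^ 2 dvd pcompose (map_poly \<sigma> p) (R + q) - q * D"
    by (simp add: algebra_simps)
  have "q dvd q ^ 2" by (simp add: power2_eq_square)
  show thesis
  proof (rule that[of "R + q"])
    show "q dvd pcompose (map_poly \<sigma> p) (R + q)"
      using dvd_trans[OF \<open>q dvd q ^ 2\<close> taylor] by (simp add: dvd_diff_left_iff)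
    show "\<not> q ^ 2 dvd pcompose (map_poly \<sigma> p) (R + q)"
    proof
      assume "q ^ 2 dvd pcompose (map_poly \<sigma> p) (R + q)"
      then have "q * q dvd q * D" using taylor by (simp add: dvd_diff_right_iff power2_eq_square)
      with q \<open>\<not> q dvd D\<close> show False by (simp add: irreducible_def)
    qed
  qed simp
qed

lemma exists_exact_lift:
  fixes p q R :: "'a poly"
  assumes surj: "surj \<sigma>" and p: "irreducible p" and q: "irreducible q"
    and q_dvd: "q dvd pcompose (map_poly \<sigma> p) R"
    and surj_mod: "\<forall>r. \<exists>g. q dvd r - pcompose (map_poly \<sigma> g) R"
  obtains S where "q dvd pcompose (map_poly \<sigma> p) S" "\<not> q ^ 2 dvd pcompose (map_poly \<sigma> p) S"
    "\<forall>r. \<exists>g. q dvd r - pcompose (map_poly \<sigma> g) S"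
proof -
  obtain T where T: "q dvd [:0, 1:] - pcompose (map_poly \<sigma> T) R" using surj_mod by blast
  obtain S where S: "q dvd S - R" "q dvd pcompose (map_poly \<sigma> p) S"
    "\<not> q ^ 2 dvd pcompose (map_poly \<sigma> p) S"
  proof (cases "pderiv q = 0")
    case True
    with q_dvd show thesis
      using not_sq_dvd_pcompose_map_poly_if_pderiv_eq_0[OF surj p q q_dvd T] by (intro that[of R]) simp_all
  next
    case False
    then have "pderiv p \<noteq> 0" using pderiv_eq_0_transfer[OF surj p q q_dvd T] by blast
    with p q q_dvd show thesis using exact_lift_if_pderiv_ne_0 that by blast
  qed
  have "\<exists>g. q dvd r - pcompose (map_poly \<sigma> g) S" for r
  proof -
    obtain g where "q dvd r - pcompose (map_poly \<sigma> g) R" using surj_mod by blast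
    moreover have "q dvd pcompose (map_poly \<sigma> g) S - pcompose (map_poly \<sigma> g) R"
      using S(1) by (rule pcompose_dvd_diff)
    ultimately have "q dvd (r - pcompose (map_poly \<sigma> g) R)
        - (pcompose (map_poly \<sigma> g) S - pcompose (map_poly \<sigma> g) R)"
      by (rule dvd_diff)
    then show ?thesis by auto
  qed
  with S show thesis using that by blast
qed

lemma quot_poly_hom_eq_pcompose_map_poly:
  assumes f: "f \<in> ring_hom (quot_poly a) (quot_poly b)"
    and f_const: "\<And>c. f (pclass a [:c:]) = pclass b [:\<sigma> c:]"
    and f_X: "f (pclass a [:0, 1:]) = pclass b R"
  shows "f (pclass a g) = pclass b (pcompose (map_poly \<sigma> g) R)"
proof (induction g)
  case 0
  show ?case using f_const[of 0] by (simp add: hom_zero)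
next
  case (pCons c g)
  have X_g: "pclass a [:0, 1:] \<otimes>\<^bsub>quot_poly a\<^esub> pclass a g \<in> carrier (quot_poly a)"
    by (simp only: pclass_mult[symmetric] pclass_in_carrier)
  have "pclass a (pCons c g)
      = pclass a [:c:] \<oplus>\<^bsub>quot_poly a\<^esub> pclass a [:0, 1:] \<otimes>\<^bsub>quot_poly a\<^esub> pclass a g"
    by (simp flip: pclass_add pclass_mult)
  then have "f (pclass a (pCons c g)) = f (pclass a [:c:]) \<oplus>\<^bsub>quot_poly b\<^esub>
      f (pclass a [:0, 1:]) \<otimes>\<^bsub>quot_poly b\<^esub> f (pclass a g)"
    by (simp only: ring_hom_add[OF f pclass_in_carrier X_g]
        ring_hom_mult[OF f pclass_in_carrier pclass_in_carrier])
  also have "\<dots> = pclass b ([:\<sigma> c:] + R * pcompose (map_poly \<sigma> g) R)"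
    by (simp only: f_const f_X pCons.IH pclass_add pclass_mult)
  also have "\<dots> = pclass b (pcompose (map_poly \<sigma> (pCons c g)) R)"
    by (simp add: map_poly_pCons hom_zero pcompose_pCons)
  finally show ?case .
qed

lemma quot_poly_iso_dvd_and_surj_mod:
  fixes p q R :: "'a poly"
  assumes q: "irreducible q" and "m \<ge> 1"
    and f: "f \<in> ring_iso (quot_poly (p ^ m)) (quot_poly (q ^ m))"
    and f_const: "\<And>c. f (pclass (p ^ m) [:c:]) = pclass (q ^ m) [:\<sigma> c:]"
    and f_X: "f (pclass (p ^ m) [:0, 1:]) = pclass (q ^ m) R"
  shows "q dvd pcompose (map_poly \<sigma> p) R"
    and "\<forall>r. \<exists>g. q dvd r - pcompose (map_poly \<sigma> g) R"
proof -
  have f_hom: "f \<in> ring_hom (quot_poly (p ^ m)) (quot_poly (q ^ m))"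
    using f by (simp add: ring_iso_def)
  note f_eq = quot_poly_hom_eq_pcompose_map_poly[OF f_hom f_const f_X]
  have "q dvd q ^ m" using \<open>m \<ge> 1\<close> by (simp add: dvd_power)
  have "pclass (p ^ m) (p ^ m) = pclass (p ^ m) 0" by (simp add: pclass_eq_iff)
  then have "pclass (q ^ m) (pcompose (map_poly \<sigma> (p ^ m)) R) = pclass (q ^ m) 0"
    using f_eq[of "p ^ m"] f_eq[of 0] by simp
  then have "q ^ m dvd pcompose (map_poly \<sigma> p) R ^ m"
    by (simp add: pclass_eq_iff map_poly_power pcompose_power_left)
  then have "q dvd pcompose (map_poly \<sigma> p) R ^ m"
    using \<open>q dvd q ^ m\<close> by (rule dvd_trans[rotated])
  then show "q dvd pcompose (map_poly \<sigma> p) R"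
    using field_poly_irreducible_imp_prime[OF q] \<open>m \<ge> 1\<close> by (simp add: prime_elem_dvd_power_iff)
  show "\<forall>r. \<exists>g. q dvd r - pcompose (map_poly \<sigma> g) R"
  proof
    fix r
    have "pclass (q ^ m) r \<in> f ` carrier (quot_poly (p ^ m))"
      using f by (simp add: ring_iso_def bij_betw_def pclass_in_carrier)
    then obtain g where "pclass (q ^ m) r = pclass (q ^ m) (pcompose (map_poly \<sigma> g) R)"
      by (auto simp: carrier_quot_poly f_eq)
    then have "q ^ m dvd r - pcompose (map_poly \<sigma> g) R" by (simp add: pclass_eq_iff)
    then show "\<exists>g. q dvd r - pcompose (map_poly \<sigma> g) R"
      using \<open>q dvd q ^ m\<close> dvd_trans by blast
  qed
qed

end

lemma field_aut_field_endo: "field_aut \<sigma> \<Longrightarrow> field_endo \<sigma>"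
  by unfold_locales (simp_all add: field_aut_def)

theorem mainTheorem15:
  fixes P1 P2 R :: "'a::field poly" and m :: nat and f :: "'a poly set \<Rightarrow> 'a poly set"
  assumes "irreducible P1" and "irreducible P2" and "m \<ge> 1"
    and "f \<in> ring_iso (quot_poly (P1 ^ m)) (quot_poly (P2 ^ m))"
    and "stabilizes_K (P1 ^ m) (P2 ^ m) f"
    and "f (pclass (P1 ^ m) [:0, 1:]) = pclass (P2 ^ m) R"
    and "pderiv (R mod P2) \<noteq> 0"
  shows "\<forall>n\<ge>1. quot_poly (P1 ^ n) \<simeq> quot_poly (P2 ^ n)"
proof -
  obtain \<sigma> where \<sigma>: "field_aut \<sigma>"
    and f_const: "\<And>c. f (pclass (P1 ^ m) [:c:]) = pclass (P2 ^ m) [:\<sigma> c:]"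
    using assms(5) unfolding stabilizes_K_def by blast
  interpret field_endo \<sigma> using \<sigma> by (rule field_aut_field_endo)
  have "surj \<sigma>" using \<sigma> by (simp add: field_aut_def bij_is_surj)
  obtain S where "P2 dvd pcompose (map_poly \<sigma> P1) S" "\<not> P2 ^ 2 dvd pcompose (map_poly \<sigma> P1) S"
    "\<forall>r. \<exists>g. P2 dvd r - pcompose (map_poly \<sigma> g) S"
    using exists_exact_lift[OF \<open>surj \<sigma>\<close> assms(1,2)]
      quot_poly_iso_dvd_and_surj_mod[OF assms(2,3,4) f_const assms(6)] by blast
  then show ?thesis using quot_poly_power_iso[OF assms(1,2)] by blast
qed

end
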